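(* (i) For every integer $k\ge 1$, the vector $(2,4,k,1)$ is not 0-realizable. (ii) The vector $(2,5,2,1)$ is not 0-realizable.
   Context: All graphs are finite, nonempty, and reflexive (every vertex has a loop). $N[v]$ is the closed neighborhood of $v$ (including $v$). For distinct $v,w$, $w$ strictly corners $v$ if $N[v]\subsetneq N[w]$; $v$ is then a strict corner. A vertex dominates a set if adjacent to all its vertices. Corner ranking: set $G^{(1)}=G$, $k=1$. If $G^{(k)}$ is a clique, give all its vertices rank $k$ and stop. Else if $G^{(k)}$ has no strict corners, give all its vertices rank $\infty$ and stop. Else give every strict corner of $G^{(k)}$ rank $k$, delete them to get $G^{(k+1)}$ (induced subgraph), increase $k$ and repeat. The corner rank of $G$ is the largest rank of a vertex; $X_k$ is the set of rank-$k$ vertices. A graph is cop-win iff its corner rank is finite. A graph of finite corner rank $\alpha\ge2$ is of type 1 if some (equivalently every) vertex of rank $\alpha$ dominates $V(G^{(\alpha-1)})$, and of type 0 otherwise. The rank cardinality vector is $(x_\alpha,\dots,x_1)$ with $x_k=|X_k|$. A vector (finite list of positive integers) is 0-realizable if it is the rank cardinality vector of some cop-win graph of type 0. *)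

theory Defs
  imports Main
begin

definition refl_graph :: "'a set \<Rightarrow> ('a \<Rightarrow> 'a \<Rightarrow> bool) \<Rightarrow> bool" where
  "refl_graph V E \<longleftrightarrow> finite V \<and> V \<noteq> {} \<and> (\<forall>v\<in>V. E v v)
     \<and> (\<forall>v\<in>V. \<forall>w\<in>V. E v w \<longleftrightarrow> E w v)"

definition cnbhd :: "'a set \<Rightarrow> ('a \<Rightarrow> 'a \<Rightarrow> bool) \<Rightarrow> 'a \<Rightarrow> 'a set" where
  "cnbhd S E v = {w \<in> S. E v w}"

definition strict_corners :: "'a set \<Rightarrow> ('a \<Rightarrow> 'a \<Rightarrow> bool) \<Rightarrow> 'a set" where
  "strict_corners S E = {v \<in> S. \<exists>w\<in>S. w \<noteq> v \<and> cnbhd S E v \<subset> cnbhd S E w}"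

definition is_clique :: "'a set \<Rightarrow> ('a \<Rightarrow> 'a \<Rightarrow> bool) \<Rightarrow> bool" where
  "is_clique S E \<longleftrightarrow> (\<forall>v\<in>S. \<forall>w\<in>S. E v w)"

definition corner_step :: "('a \<Rightarrow> 'a \<Rightarrow> bool) \<Rightarrow> 'a set \<Rightarrow> 'a set" where
  "corner_step E S = (if is_clique S E \<or> strict_corners S E = {} then S else S - strict_corners S E)"

definition stage :: "'a set \<Rightarrow> ('a \<Rightarrow> 'a \<Rightarrow> bool) \<Rightarrow> nat \<Rightarrow> 'a set" where
  "stage V E k = (corner_step E ^^ (k - 1)) V"

definition cop_win :: "'a set \<Rightarrow> ('a \<Rightarrow> 'a \<Rightarrow> bool) \<Rightarrow> bool" where
  "cop_win V E \<longleftrightarrow> (\<exists>k\<ge>1. is_clique (stage V E k) E)"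

definition corner_rank :: "'a set \<Rightarrow> ('a \<Rightarrow> 'a \<Rightarrow> bool) \<Rightarrow> nat" where
  "corner_rank V E = (LEAST k. k \<ge> 1 \<and> is_clique (stage V E k) E)"

definition rank_set :: "'a set \<Rightarrow> ('a \<Rightarrow> 'a \<Rightarrow> bool) \<Rightarrow> nat \<Rightarrow> 'a set" where
  "rank_set V E k = (if k = corner_rank V E then stage V E k
                     else strict_corners (stage V E k) E)"

definition rank_card_vector :: "'a set \<Rightarrow> ('a \<Rightarrow> 'a \<Rightarrow> bool) \<Rightarrow> nat list" where
  "rank_card_vector V E = map (\<lambda>k. card (rank_set V E k)) (rev [1..<corner_rank V E + 1])"

definition type1 :: "'a set \<Rightarrow> ('a \<Rightarrow> 'a \<Rightarrow> bool) \<Rightarrow> bool" where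
  "type1 V E \<longleftrightarrow> corner_rank V E \<ge> 2 \<and>
     (\<exists>v\<in>rank_set V E (corner_rank V E). \<forall>w\<in>stage V E (corner_rank V E - 1). E v w)"

definition type0 :: "'a set \<Rightarrow> ('a \<Rightarrow> 'a \<Rightarrow> bool) \<Rightarrow> bool" where
  "type0 V E \<longleftrightarrow> corner_rank V E \<ge> 2 \<and> \<not> type1 V E"

text \<open>0-realizable: rank cardinality vector of some cop-win graph of type 0
  (vertices taken from nat; every finite graph is isomorphic to one on nat).\<close>
definition zero_realizable :: "nat list \<Rightarrow> bool" where
  "zero_realizable xs \<longleftrightarrow> (\<exists>(V::nat set) E. refl_graph V E \<and> cop_win V E \<and> type0 V E
       \<and> rank_card_vector V E = xs)"

end

theory Submission
  imports Defs
begin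

text \<open>
  Let \<open>x\<close> be the unique vertex of rank 1, \<open>S2 \<supseteq> S3\<close> the vertex sets of \<open>G\<^sup>(\<^sup>2\<^sup>)\<close> and
  \<open>G\<^sup>(\<^sup>3\<^sup>)\<close>, and \<open>{a, b}\<close> the final clique. Rank-2 vertices are strictly dominated in \<open>S2\<close> by
  vertices of \<open>S3\<close>, no vertex of \<open>S3\<close> is strictly dominated in \<open>S2\<close>, and rank-3 vertices are
  dominated in \<open>S3\<close> by \<open>a\<close> or \<open>b\<close>. A dominator of \<open>x\<close> provides \<open>z \<in> S3\<close> adjacent to all
  rank-2 vertices; say \<open>z\<close> is dominated by \<open>a\<close>. Type 0 yields \<open>p, q \<in> S3\<close> with \<open>p\<close> not
  adjacent to \<open>a\<close> and \<open>q\<close> not adjacent to \<open>b\<close>, so \<open>p\<close> is dominated by \<open>b\<close> and \<open>q\<close> by \<open>a\<close>.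
  Neither domination survives in \<open>S2\<close>, so a rank-2 vertex separates each pair; its dominator
  in \<open>S3\<close> (\<open>r\<close> for \<open>p\<close>, \<open>w\<close> for \<open>q\<close>) is a further vertex. Now \<open>z, p, r, q\<close> are distinct
  rank-3 vertices, and \<open>q\<close> has a neighbour \<open>t\<close> outside \<open>{a, b, z, p, r, q}\<close>, which excludes
  exactly four of them. With five rank-3 and two rank-2 vertices, \<open>p\<close> must be adjacent to
  \<open>t\<close> (otherwise \<open>p\<close> would be dominated by \<open>r\<close>), so \<open>t\<close> is dominated by \<open>b\<close> and cannot see \<open>q\<close>.
\<close>

definition strictly_dominated :: "'a set \<Rightarrow> ('a \<Rightarrow> 'a \<Rightarrow> bool) \<Rightarrow> 'a \<Rightarrow> 'a \<Rightarrow> bool" where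
  "strictly_dominated S E v w \<longleftrightarrow> (\<forall>t\<in>S. E v t \<longrightarrow> E w t) \<and> (\<exists>t\<in>S. E w t \<and> \<not> E v t)"

lemma strictly_dominatedD: "strictly_dominated S E v w \<Longrightarrow> t \<in> S \<Longrightarrow> E v t \<Longrightarrow> E w t"
  unfolding strictly_dominated_def by blast

lemma cnbhd_psubset_iff: "cnbhd S E v \<subset> cnbhd S E w \<longleftrightarrow> strictly_dominated S E v w"
  unfolding strictly_dominated_def cnbhd_def psubset_eq subset_iff set_eq_iff by auto

lemma strict_corners_iff:
  "v \<in> strict_corners S E \<longleftrightarrow> v \<in> S \<and> (\<exists>w\<in>S. w \<noteq> v \<and> strictly_dominated S E v w)"
  unfolding strict_corners_def cnbhd_psubset_iff by simp

lemma strict_corners_subset: "strict_corners S E \<subseteq> S"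
  unfolding strict_corners_def by blast

lemma strictly_dominated_extend:
  assumes "strictly_dominated S' E v w" and "S' \<subseteq> S"
    and "\<And>u. u \<in> S - S' \<Longrightarrow> E v u \<Longrightarrow> E w u"
  shows "strictly_dominated S E v w"
  using assms unfolding strictly_dominated_def by blast

text \<open>A dominator with the largest neighbourhood is not itself a strict corner.\<close>
lemma strict_corner_dominated_by_non_corner:
  assumes "finite S" and "v \<in> strict_corners S E"
  obtains w where "w \<in> S - strict_corners S E" and "strictly_dominated S E v w"
proof -
  let ?W = "{w \<in> S. strictly_dominated S E v w}"
  let ?deg = "\<lambda>w. card (cnbhd S E w)"
  have "?W \<noteq> {}" and "finite ?W"
    using assms unfolding strict_corners_iff by auto
  then obtain w where w: "w \<in> ?W" and "?deg w = Max (?deg ` ?W)"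
    by (metis (no_types, lifting) Max_in finite_imageI imageE image_is_empty)
  then have max: "?deg w' \<le> ?deg w" if "w' \<in> ?W" for w'
    using \<open>finite ?W\<close> that by simp
  have "w \<notin> strict_corners S E"
  proof
    assume "w \<in> strict_corners S E"
    then obtain w' where "w' \<in> S" and ww': "strictly_dominated S E w w'"
      unfolding strict_corners_iff by auto
    then have "w' \<in> ?W"
      using w unfolding strictly_dominated_def by auto
    moreover have "?deg w < ?deg w'"
      using ww' \<open>finite S\<close> unfolding cnbhd_psubset_iff[symmetric]
      by (intro psubset_card_mono) (auto simp: cnbhd_def)
    ultimately show False
      using max by fastforce
  qed
  with w that show thesis by blast
qed

lemma unique_corner_adj_next_corners:
  assumes "strict_corners V E = {x}" and "v \<in> strict_corners (V - {x}) E"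
  shows "E v x"
proof (rule ccontr)
  assume "\<not> E v x"
  obtain w where "w \<in> V - {x}" "w \<noteq> v" and vw: "strictly_dominated (V - {x}) E v w"
    using assms(2) unfolding strict_corners_iff by auto
  have "strictly_dominated V E v w"
    using vw by (rule strictly_dominated_extend) (use \<open>\<not> E v x\<close> in auto)
  moreover have "v \<in> V"
    using assms(2) by (simp add: strict_corners_def)
  ultimately have "v \<in> strict_corners V E"
    using \<open>w \<in> V - {x}\<close> \<open>w \<noteq> v\<close> unfolding strict_corners_iff by blast
  with assms show False
    by (simp add: strict_corners_def)
qed

text \<open>Take a dominator of \<open>x\<close> or, if it is removed in the second round, a surviving dominator
  of it; every vertex removed in the second round is adjacent to \<open>x\<close>, as it would otherwise
  have been a strict corner already in the first.\<close>
lemma unique_corner_common_neighbour: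
  assumes G: "refl_graph V E" and X1: "strict_corners V E = {x}"
  obtains z where "z \<in> (V - {x}) - strict_corners (V - {x}) E"
    and "\<And>u. u \<in> strict_corners (V - {x}) E \<Longrightarrow> E z u"
proof -
  let ?X2 = "strict_corners (V - {x}) E"
  have "x \<in> strict_corners V E"
    using X1 by simp
  then obtain y where y: "y \<in> V - {x}" and xy: "strictly_dominated V E x y"
    unfolding strict_corners_iff by auto
  have adj_y: "E y u" if "u \<in> ?X2" for u
  proof -
    have "u \<in> V" and "x \<in> V"
      using that \<open>x \<in> strict_corners V E\<close> by (auto simp: strict_corners_def)
    with G unique_corner_adj_next_corners[OF X1 that] have "E x u"
      unfolding refl_graph_def by blast
    with xy \<open>u \<in> V\<close> show ?thesis
      by (simp add: strictly_dominatedD)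
  qed
  show thesis
  proof (cases "y \<in> ?X2")
    case False
    with y adj_y that show thesis by blast
  next
    case True
    have "finite (V - {x})"
      using G unfolding refl_graph_def by simp
    then obtain w where "w \<in> (V - {x}) - ?X2" and "strictly_dominated (V - {x}) E y w"
      using True by (rule strict_corner_dominated_by_non_corner)
    moreover have "u \<in> V - {x}" if "u \<in> ?X2" for u
      using that by (simp add: strict_corners_def)
    ultimately show thesis
      using adj_y that strictly_dominatedD by metis
  qed
qed

text \<open>The situation in a type-0 graph of corner rank 4: \<open>S2\<close> and \<open>S3\<close> are
  the vertex sets of \<open>G\<^sup>(\<^sup>2\<^sup>)\<close> and \<open>G\<^sup>(\<^sup>3\<^sup>)\<close>, \<open>{a, b}\<close> is the final clique, and \<open>z\<close> is the
  vertex of \<open>unique_corner_common_neighbour\<close>.\<close>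
locale corner_config =
  fixes S2 S3 :: "'a set" and E :: "'a \<Rightarrow> 'a \<Rightarrow> bool" and a b z :: 'a
  assumes graph: "refl_graph S2 E"
    and subset: "S3 \<subseteq> S2"
    and a_in: "a \<in> S3" and b_in: "b \<in> S3" and a_ne_b: "a \<noteq> b" and adj_a_b: "E a b"
    and a_not_universal: "\<exists>p\<in>S3. \<not> E a p" and b_not_universal: "\<exists>q\<in>S3. \<not> E b q"
    and removed_dominated: "\<And>u. u \<in> S2 - S3 \<Longrightarrow> \<exists>w\<in>S3. strictly_dominated S2 E u w"
    and kept_not_dominated:
      "\<And>c w. c \<in> S3 \<Longrightarrow> w \<in> S2 \<Longrightarrow> w \<noteq> c \<Longrightarrow> \<not> strictly_dominated S2 E c w"
    and kept_dominated_by_top: "\<And>c. c \<in> S3 \<Longrightarrow> c \<noteq> a \<Longrightarrow> c \<noteq> b \<Longrightarrow>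
      strictly_dominated S3 E c a \<or> strictly_dominated S3 E c b"
    and z_in: "z \<in> S3" and z_adj_removed: "\<And>u. u \<in> S2 - S3 \<Longrightarrow> E z u"
begin

lemma adj_sym: "v \<in> S2 \<Longrightarrow> w \<in> S2 \<Longrightarrow> E v w = E w v"
  using graph unfolding refl_graph_def by blast

lemma adj_refl: "v \<in> S2 \<Longrightarrow> E v v"
  using graph unfolding refl_graph_def by blast

lemma adj_sym_S3: "v \<in> S3 \<Longrightarrow> w \<in> S3 \<Longrightarrow> E v w = E w v"
  using adj_sym subset by blast

lemma finite_S3: "finite S3"
  using graph subset finite_subset unfolding refl_graph_def by blast

lemma swap: "corner_config S2 S3 E b a z"
proof
  show "strictly_dominated S3 E c b \<or> strictly_dominated S3 E c a"
    if "c \<in> S3" "c \<noteq> b" "c \<noteq> a" for c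
    using kept_dominated_by_top that by blast
  show "E b a"
    using adj_a_b adj_sym subset a_in b_in by blast
qed (use graph subset a_in b_in a_ne_b a_not_universal b_not_universal removed_dominated
      kept_not_dominated z_in z_adj_removed in auto)

lemma separating_removed_vertex:
  assumes "c \<in> S3" "w \<in> S3" "w \<noteq> c" and "strictly_dominated S3 E c w"
  obtains u where "u \<in> S2 - S3" and "E c u" and "\<not> E w u"
  using assms kept_not_dominated[of c w] strictly_dominated_extend[OF _ subset] subset by blast

lemma not_dominated_by_z: "c \<in> S3 \<Longrightarrow> c \<noteq> z \<Longrightarrow> \<not> strictly_dominated S3 E c z"
  by (metis separating_removed_vertex z_adj_removed z_in)

lemma dominated_by_other:
  assumes "c \<in> S3"
  shows "\<not> E a c \<Longrightarrow> strictly_dominated S3 E c b"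
    and "\<not> E b c \<Longrightarrow> strictly_dominated S3 E c a"
proof -
  have "E c c"
    using assms subset adj_refl by blast
  then show "\<not> E a c \<Longrightarrow> strictly_dominated S3 E c b"
    using kept_dominated_by_top[OF assms] strictly_dominatedD[OF _ assms] adj_a_b by blast
  show "\<not> E b c \<Longrightarrow> strictly_dominated S3 E c a"
    using kept_dominated_by_top[OF assms] strictly_dominatedD[OF _ assms] \<open>E c c\<close> adj_a_b
      adj_sym[of a b] subset a_in b_in by blast
qed

lemma z_ne_a: "z \<noteq> a"
proof
  assume "z = a"
  obtain q where "q \<in> S3" and "\<not> E b q"
    using b_not_universal by blast
  moreover have "q \<noteq> a"
    using \<open>\<not> E b q\<close> adj_a_b adj_sym subset a_in b_in by blast
  ultimately show False
    using dominated_by_other(2) not_dominated_by_z \<open>z = a\<close> by blast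
qed

lemma z_ne_b: "z \<noteq> b"
proof
  assume "z = b"
  obtain p where "p \<in> S3" and "\<not> E a p"
    using a_not_universal by blast
  moreover have "p \<noteq> b"
    using \<open>\<not> E a p\<close> adj_a_b by blast
  ultimately show False
    using dominated_by_other(1) not_dominated_by_z \<open>z = b\<close> by blast
qed

context
  fixes p q :: 'a
  assumes z_below_a: "strictly_dominated S3 E z a"
    and p_in: "p \<in> S3" and not_adj_a_p: "\<not> E a p"
    and q_in: "q \<in> S3" and not_adj_b_q: "\<not> E b q"
begin

lemma p_below_b: "strictly_dominated S3 E p b"
  using dominated_by_other(1) p_in not_adj_a_p .

lemma q_below_a: "strictly_dominated S3 E q a"
  using dominated_by_other(2) q_in not_adj_b_q .

lemma not_adj_z_p: "\<not> E z p"
  using strictly_dominatedD[OF z_below_a p_in] not_adj_a_p by blast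

lemma not_adj_p_q: "\<not> E p q"
  using strictly_dominatedD[OF p_below_b q_in] not_adj_b_q by blast

lemma p_ne: "p \<noteq> a" "p \<noteq> b"
  using not_adj_a_p adj_refl adj_a_b subset a_in by blast+

lemma q_ne: "q \<noteq> a" "q \<noteq> b" "q \<noteq> p"
  using not_adj_b_q adj_refl adj_a_b adj_sym subset a_in b_in q_in not_adj_p_q by blast+

lemma dominator_of_neighbour_of_p:
  obtains u r where "u \<in> S2 - S3" "\<not> E b u" "strictly_dominated S2 E u r" "r \<in> S3"
    "E r u" "E r p" "E r z" "strictly_dominated S3 E r b"
proof -
  obtain u where u: "u \<in> S2 - S3" and "E p u" and "\<not> E b u"
    using separating_removed_vertex[OF p_in b_in _ p_below_b] p_ne by metis
  obtain r where r: "r \<in> S3" and ur: "strictly_dominated S2 E u r"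
    using removed_dominated[OF u] by blast
  have "E r u" "E r p" "E r z"
    using strictly_dominatedD[OF ur] u adj_refl adj_sym z_in p_in \<open>E p u\<close> subset z_adj_removed
    by blast+
  moreover have "strictly_dominated S3 E r b"
  proof -
    have "r \<noteq> a" "r \<noteq> b"
      using \<open>E r p\<close> not_adj_a_p \<open>E r u\<close> \<open>\<not> E b u\<close> by blast+
    then show ?thesis
      using kept_dominated_by_top[OF r] strictly_dominatedD[of S3 E r a p] p_in \<open>E r p\<close>
        not_adj_a_p by blast
  qed
  ultimately show thesis
    using that u \<open>\<not> E b u\<close> ur r by blast
qed

context
  fixes u r :: 'a
  assumes u_in: "u \<in> S2 - S3" and not_adj_b_u: "\<not> E b u"
    and u_below_r: "strictly_dominated S2 E u r" and r_in: "r \<in> S3"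
    and adj_r_u: "E r u" and adj_r_p: "E r p" and adj_r_z: "E r z"
    and r_below_b: "strictly_dominated S3 E r b"
begin

lemma adj_b_z: "E b z"
  using strictly_dominatedD[OF r_below_b z_in adj_r_z] .

lemma adj_a_r: "E a r"
  using strictly_dominatedD[OF z_below_a r_in] adj_r_z adj_sym subset r_in z_in by blast

lemma not_adj_r_q: "\<not> E r q"
  using strictly_dominatedD[OF r_below_b q_in] not_adj_b_q by blast

lemma r_ne: "r \<noteq> a" "r \<noteq> b" "r \<noteq> z" "r \<noteq> p" "r \<noteq> q"
  using adj_r_p not_adj_a_p adj_r_u not_adj_b_u not_adj_z_p adj_r_z adj_sym subset p_in z_in
    not_adj_r_q adj_refl r_in by blast+

lemma z_ne: "z \<noteq> p" "z \<noteq> q"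
  using not_adj_z_p adj_refl subset z_in adj_b_z not_adj_b_q by blast+

text \<open>Otherwise \<open>q\<close> would be strictly dominated by \<open>z\<close> in \<open>S3\<close> (\<open>b\<close> separates them),
  which is impossible because \<open>z\<close> sees every removed vertex.\<close>
lemma q_has_far_neighbour:
  assumes "E z q"
  shows "\<exists>s\<in>S3 - {a, b, z, p, r, q}. E q s"
proof (rule ccontr)
  assume far: "\<not> ?thesis"
  have "E z a" "E z z" "E z b" "\<not> E q b" "\<not> E q p" "\<not> E q r"
    using strictly_dominatedD[OF z_below_a z_in] adj_refl adj_b_z not_adj_b_q not_adj_p_q
      not_adj_r_q adj_sym subset z_in a_in b_in p_in r_in q_in by blast+
  with far assms have "strictly_dominated S3 E q z"
    using b_in unfolding strictly_dominated_def by blast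
  with not_dominated_by_z q_in z_ne show False
    by blast
qed

lemma four_corners: "{z, p, r, q} \<subseteq> S3 - {a, b}" "card {z, p, r, q} = 4"
  using z_in p_in r_in q_in z_ne_a z_ne_b p_ne q_ne r_ne z_ne by auto

lemma dominator_of_neighbour_of_q:
  obtains u' w where "u' \<in> S2 - S3" "E q u'" "strictly_dominated S2 E u' w" "w \<in> S3"
    "E w q" "E w z" "w \<notin> {a, b, p, r}"
proof -
  obtain u' where u': "u' \<in> S2 - S3" and "E q u'" and "\<not> E a u'"
    using separating_removed_vertex[OF q_in a_in _ q_below_a] q_ne by metis
  obtain w where w: "w \<in> S3" and u'w: "strictly_dominated S2 E u' w"
    using removed_dominated[OF u'] by blast
  have "E w u'" "E w q" "E w z"
    using strictly_dominatedD[OF u'w] u' adj_refl adj_sym z_in q_in \<open>E q u'\<close> subset z_adj_removed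
    by blast+
  moreover have "w \<notin> {a, b, p, r}"
    using \<open>E w u'\<close> \<open>\<not> E a u'\<close> \<open>E w q\<close> not_adj_b_q \<open>E w z\<close> not_adj_z_p not_adj_r_q
      adj_sym subset p_in z_in by auto
  ultimately show thesis
    using that u' \<open>E q u'\<close> u'w w by blast
qed

context
  fixes u' w :: 'a
  assumes u'_in: "u' \<in> S2 - S3" and adj_q_u': "E q u'"
    and u'_below_w: "strictly_dominated S2 E u' w" and w_in: "w \<in> S3"
    and adj_w_q: "E w q" and adj_w_z: "E w z" and w_ne: "w \<notin> {a, b, p, r}"
begin

lemma far_neighbour_of_q: "\<exists>s\<in>S3 - {a, b, z, p, r, q}. E q s"
proof (cases "w = z \<or> w = q")
  case True
  then have "E z q"
    using adj_w_q adj_w_z adj_sym_S3[OF q_in z_in] by auto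
  then show ?thesis
    by (rule q_has_far_neighbour)
next
  case False
  have "E q w"
    using adj_w_q adj_sym_S3[OF q_in w_in] by simp
  with False w_in w_ne show ?thesis
    by blast
qed

lemma not_four_corners: "card (S3 - {a, b}) \<noteq> 4"
proof
  assume "card (S3 - {a, b}) = 4"
  then have "S3 - {a, b} = {z, p, r, q}"
    using four_corners finite_S3 by (metis card_subset_eq finite_Diff)
  then show False
    using far_neighbour_of_q by blast
qed

lemma u'_ne_u: "u' \<noteq> u"
proof
  assume "u' = u"
  have "E u' q"
    using u'_in adj_q_u' adj_sym subset q_in by auto
  with \<open>u' = u\<close> show False
    using strictly_dominatedD[OF u_below_r] subset q_in not_adj_r_q by auto
qed

text \<open>A non-neighbour \<open>t\<close> of \<open>p\<close> would make \<open>p\<close> dominated by \<open>r\<close> in \<open>S3\<close>; the removed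
  vertex separating them must be \<open>u'\<close>, whose dominator \<open>w\<close> then sees \<open>p\<close>, but no candidate
  for \<open>w\<close> does.\<close>
lemma adj_p_if_five_corners:
  assumes S3: "S3 = {a, b, z, p, r, q, t}" and D: "S2 - S3 = {u, u'}"
  shows "E p t"
proof (rule ccontr)
  assume "\<not> E p t"
  have "E b r" "E a r" "E r r"
    using strictly_dominatedD[OF r_below_b r_in] adj_a_r adj_refl subset r_in by auto
  then have "strictly_dominated S3 E p r"
    using S3 \<open>\<not> E p t\<close> not_adj_a_p not_adj_z_p not_adj_p_q adj_r_p
    unfolding strictly_dominated_def by (auto simp: adj_sym_S3 p_in)
  then obtain v where "v \<in> S2 - S3" "E p v" "\<not> E r v"
    using separating_removed_vertex[OF p_in r_in] r_ne(4) by metis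
  then have "v = u'"
    using D adj_r_u by auto
  then have "E w p"
    using strictly_dominatedD[OF u'_below_w] \<open>E p v\<close> \<open>v \<in> S2 - S3\<close> adj_sym subset p_in by auto
  moreover have "w = z \<or> w = q \<or> w = t"
    using w_in w_ne S3 by auto
  ultimately show False
    using \<open>\<not> E p t\<close> not_adj_z_p not_adj_p_q S3 by (auto simp: adj_sym_S3 p_in q_in z_in)
qed

lemma not_five_corners:
  assumes C5: "card (S3 - {a, b}) = 5" and D2: "card (S2 - S3) = 2"
  shows False
proof -
  have "card ((S3 - {a, b}) - {z, p, r, q}) = 1"
    using C5 four_corners finite_S3 by (simp add: card_Diff_subset)
  then obtain t where t: "(S3 - {a, b}) - {z, p, r, q} = {t}"
    by (rule card_1_singletonE)
  then have S3: "S3 = {a, b, z, p, r, q, t}" and "t \<in> S3" "t \<noteq> a" "t \<noteq> b"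
    using four_corners a_in b_in by blast+
  have "S3 - {a, b, z, p, r, q} = {t}"
    using t by auto
  then have "E q t"
    using far_neighbour_of_q by auto
  have "finite (S2 - S3)"
    using graph unfolding refl_graph_def by simp
  moreover have "{u, u'} \<subseteq> S2 - S3" "card {u, u'} = 2"
    using u_in u'_in u'_ne_u by auto
  ultimately have "S2 - S3 = {u, u'}"
    using D2 by (metis card_subset_eq)
  then have "E t p"
    using adj_p_if_five_corners[OF S3] adj_sym_S3[OF p_in \<open>t \<in> S3\<close>] by simp
  then have "strictly_dominated S3 E t b"
    using kept_dominated_by_top[OF \<open>t \<in> S3\<close> \<open>t \<noteq> a\<close> \<open>t \<noteq> b\<close>]
      strictly_dominatedD[of S3 E t a p] p_in not_adj_a_p by auto
  then show False
    using strictly_dominatedD[of S3 E t b q] q_in not_adj_b_q \<open>E q t\<close>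
      adj_sym_S3[OF q_in \<open>t \<in> S3\<close>] by auto
qed

end

end

end

lemma card_bound_if_z_below_a:
  assumes "strictly_dominated S3 E z a"
  shows "card (S3 - {a, b}) \<noteq> 4 \<and> \<not> (card (S3 - {a, b}) = 5 \<and> card (S2 - S3) = 2)"
proof -
  obtain p q where p: "p \<in> S3" "\<not> E a p" and q: "q \<in> S3" "\<not> E b q"
    using a_not_universal b_not_universal by blast
  obtain u r where ur: "u \<in> S2 - S3" "\<not> E b u" "strictly_dominated S2 E u r" "r \<in> S3"
    "E r u" "E r p" "E r z" "strictly_dominated S3 E r b"
    using dominator_of_neighbour_of_p[OF assms p q] by blast
  obtain u' w where u'w: "u' \<in> S2 - S3" "E q u'" "strictly_dominated S2 E u' w" "w \<in> S3"
    "E w q" "E w z" "w \<notin> {a, b, p, r}"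
    using dominator_of_neighbour_of_q[OF assms p q ur] by blast
  show ?thesis
    using not_four_corners[OF assms p q ur u'w] not_five_corners[OF assms p q ur u'w] by blast
qed

lemma card_bound: "card (S3 - {a, b}) \<noteq> 4 \<and> \<not> (card (S3 - {a, b}) = 5 \<and> card (S2 - S3) = 2)"
proof -
  have "strictly_dominated S3 E z a \<or> strictly_dominated S3 E z b"
    using kept_dominated_by_top z_in z_ne_a z_ne_b by blast
  then show ?thesis
    using card_bound_if_z_below_a corner_config.card_bound_if_z_below_a[OF swap]
    by (metis insert_commute)
qed

end

lemma refl_graph_subset: "refl_graph V E \<Longrightarrow> S \<subseteq> V \<Longrightarrow> S \<noteq> {} \<Longrightarrow> refl_graph S E"
  unfolding refl_graph_def by (meson finite_subset subsetD)

lemma corner_config_of_rounds: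
  assumes G: "refl_graph S2 E" and S3: "S3 = S2 - strict_corners S2 E"
    and top: "S3 - strict_corners S3 E = {a, b}" and "a \<noteq> b" "E a b"
    and "\<exists>p\<in>S3. \<not> E a p" "\<exists>q\<in>S3. \<not> E b q"
    and "z \<in> S3" and z_adj: "\<And>u. u \<in> strict_corners S2 E \<Longrightarrow> E z u"
  shows "corner_config S2 S3 E a b z"
proof
  have fin: "finite S2" "finite S3"
    using G S3 unfolding refl_graph_def by auto
  have removed: "S2 - S3 = strict_corners S2 E"
    using S3 strict_corners_subset[of S2 E] by blast
  show "\<exists>w\<in>S3. strictly_dominated S2 E u w" if "u \<in> S2 - S3" for u
    using strict_corner_dominated_by_non_corner[OF fin(1)] that removed S3 by metis
  show "E z u" if "u \<in> S2 - S3" for u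
    using z_adj that removed by blast
  show "\<not> strictly_dominated S2 E c w" if "c \<in> S3" "w \<in> S2" "w \<noteq> c" for c w
    using that S3 strict_corners_iff[of c S2 E] by blast
  show "strictly_dominated S3 E c a \<or> strictly_dominated S3 E c b"
    if "c \<in> S3" "c \<noteq> a" "c \<noteq> b" for c
  proof -
    have "c \<in> strict_corners S3 E"
      using that top by blast
    then obtain w where "w \<in> {a, b}" "strictly_dominated S3 E c w"
      using strict_corner_dominated_by_non_corner[OF fin(2)] top by metis
    then show ?thesis
      by blast
  qed
  show "S3 \<subseteq> S2" "a \<in> S3" "b \<in> S3"
    using S3 top by auto
qed (use G assms(4-8) in blast)+

lemma rank_card_vector_length: "length (rank_card_vector V E) = corner_rank V E"
  unfolding rank_card_vector_def by simp

lemma clique_at_corner_rank: "cop_win V E \<Longrightarrow> is_clique (stage V E (corner_rank V E)) E"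
  unfolding cop_win_def corner_rank_def by (metis (mono_tags, lifting) LeastI_ex)

lemma rank_set_below_corner_rank:
  "k < corner_rank V E \<Longrightarrow> rank_set V E k = strict_corners (stage V E k) E"
  unfolding rank_set_def by simp

lemma stage_Suc_below_corner_rank:
  assumes "1 \<le> k" "k < corner_rank V E" and "rank_set V E k \<noteq> {}"
  shows "stage V E (Suc k) = stage V E k - strict_corners (stage V E k) E"
proof -
  have "\<not> is_clique (stage V E k) E"
    using not_less_Least[of k "\<lambda>k. k \<ge> 1 \<and> is_clique (stage V E k) E"] assms(1,2)
    unfolding corner_rank_def by blast
  moreover have "stage V E (Suc k) = corner_step E (stage V E k)"
    using assms(1) unfolding stage_def by (cases k) auto
  ultimately show ?thesis
    using assms rank_set_below_corner_rank[OF assms(2)] unfolding corner_step_def by auto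
qed

lemma rounds_of_rank_card_vector_4:
  assumes vec: "rank_card_vector V E = [n4, n3, n2, 1]" and "n2 \<ge> 1" and "n3 \<ge> 1"
  obtains x where "corner_rank V E = 4" and "strict_corners V E = {x}"
    and "stage V E 2 = V - {x}"
    and "stage V E 3 = stage V E 2 - strict_corners (stage V E 2) E"
    and "stage V E 4 = stage V E 3 - strict_corners (stage V E 3) E"
    and "card (strict_corners (stage V E 2) E) = n2"
    and "card (strict_corners (stage V E 3) E) = n3" and "card (stage V E 4) = n4"
proof -
  have r: "corner_rank V E = 4"
    using rank_card_vector_length[of V E] vec by simp
  then have "rev [1..<corner_rank V E + 1] = [4, 3, 2, 1]"
    by (simp add: upt_rec)
  then have X4: "card (stage V E 4) = n4" and X3: "card (rank_set V E 3) = n3"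
    and X2: "card (rank_set V E 2) = n2" and X1: "card (strict_corners V E) = 1"
    using vec r rank_set_below_corner_rank[of 1 V E]
    unfolding rank_card_vector_def by (auto simp: rank_set_def stage_def)
  obtain x where x: "strict_corners V E = {x}"
    using X1 by (rule card_1_singletonE)
  have "rank_set V E 1 \<noteq> {}" "rank_set V E 2 \<noteq> {}" "rank_set V E 3 \<noteq> {}"
    using x X2 X3 \<open>n2 \<ge> 1\<close> \<open>n3 \<ge> 1\<close> r by (auto simp: rank_set_def stage_def)
  then have "stage V E (Suc 1) = V - {x}"
    and "stage V E 3 = stage V E 2 - strict_corners (stage V E 2) E"
    and "stage V E 4 = stage V E 3 - strict_corners (stage V E 3) E"
    using stage_Suc_below_corner_rank[of 1 V E] stage_Suc_below_corner_rank[of 2 V E]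
      stage_Suc_below_corner_rank[of 3 V E] r x by (simp_all add: stage_def)
  moreover have "rank_set V E 2 = strict_corners (stage V E 2) E"
    and "rank_set V E 3 = strict_corners (stage V E 3) E"
    using rank_set_below_corner_rank[of _ V E] r by simp_all
  ultimately show thesis
    using that r x X2 X3 X4 by (simp add: numeral_2_eq_2)
qed

lemma type0_rank_card_vector_bound:
  assumes G: "refl_graph V E" and cw: "cop_win V E" and t0: "type0 V E"
    and vec: "rank_card_vector V E = [2, n3, n2, 1]" and "n2 \<ge> 1" and "n3 \<ge> 1"
  shows "n3 \<noteq> 4 \<and> \<not> (n3 = 5 \<and> n2 = 2)"
proof -
  define S2 S3 where "S2 = stage V E 2" and "S3 = stage V E 3"
  obtain x where r: "corner_rank V E = 4" and x: "strict_corners V E = {x}"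
    and S2: "S2 = V - {x}" and S3: "S3 = S2 - strict_corners S2 E"
    and S4: "stage V E 4 = S3 - strict_corners S3 E"
    and X2: "card (strict_corners S2 E) = n2" and X3: "card (strict_corners S3 E) = n3"
    and X4: "card (stage V E 4) = 2"
    using rounds_of_rank_card_vector_4[OF vec \<open>n2 \<ge> 1\<close> \<open>n3 \<ge> 1\<close>] unfolding S2_def S3_def .
  obtain a b where "a \<noteq> b" and top: "S3 - strict_corners S3 E = {a, b}"
    using X4 S4 by (auto simp: card_2_iff)
  have "E a b"
    using clique_at_corner_rank[OF cw] r S4 top unfolding is_clique_def by simp
  have "\<not> (\<exists>v\<in>{a, b}. \<forall>w\<in>S3. E v w)"
    using t0 r S4 top unfolding type0_def type1_def rank_set_def S3_def by simp
  then have non_universal: "\<exists>p\<in>S3. \<not> E a p" "\<exists>q\<in>S3. \<not> E b q"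
    by blast+
  obtain z where z: "z \<in> S3" "\<And>u. u \<in> strict_corners S2 E \<Longrightarrow> E z u"
    using unique_corner_common_neighbour[OF G x] unfolding S3 S2 by blast
  have "refl_graph S2 E"
  proof (rule refl_graph_subset[OF G])
    show "S2 \<subseteq> V" "S2 \<noteq> {}"
      using S2 S3 top by blast+
  qed
  then interpret corner_config S2 S3 E a b z
    using S3 top \<open>a \<noteq> b\<close> \<open>E a b\<close> non_universal z by (rule corner_config_of_rounds)
  have "S3 - {a, b} = strict_corners S3 E" "S2 - S3 = strict_corners S2 E"
    using top S3 strict_corners_subset[of S2 E] strict_corners_subset[of S3 E] by blast+
  then show ?thesis
    using card_bound X2 X3 by simp
qed

lemma not_zero_realizable:
  assumes "n2 \<ge> 1" and "n3 = 4 \<or> n3 = 5 \<and> n2 = 2"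
  shows "\<not> zero_realizable [2, n3, n2, 1]"
  using type0_rank_card_vector_bound[of _ _ n3 n2] assms unfolding zero_realizable_def by auto

theorem theorem3p26:
  shows "(\<forall>k::nat. k \<ge> 1 \<longrightarrow> \<not> zero_realizable [2, 4, k, 1])
         \<and> \<not> zero_realizable [2, 5, 2, 1]"
  using not_zero_realizable by simp

end
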